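(* Let $i,j\ge1$ with $i+j=n$. Under the isomorphism $U(\mathfrak h_n)\cong U(\mathfrak h_i)\otimes U(\mathfrak h_j)$, the algebra $W^n$ is a subalgebra of $W^i\otimes W^j$.
   Context: For $m\ge1$, $U(\mathfrak h_m)$ is the associative superalgebra generated by odd elements $\xi_1,\dots,\xi_m$ with $\xi_a\xi_b+\xi_b\xi_a=0$ for $a\neq b$, $x_a=\xi_a^2$; it is the enveloping algebra of the Cartan subalgebra of $Q(m)$. $W^m\subset U(\mathfrak h_m)$ is the finite $W$-algebra of $Q(m)$ associated with the principal even nilpotent element, realized in $U(\mathfrak h_m)$ via the injective Harish-Chandra homomorphism; concretely it is the subalgebra generated by $u_k(0),u_k(1)$ ($1\le k\le m$), the even and odd parts of $\sum_{1\le i_1<\dots<i_k\le m}\prod_{l=1}^{k}(x_{i_l}+(-1)^{k-l}\xi_{i_l})$ (ordered product). The isomorphism $U(\mathfrak h_n)\cong U(\mathfrak h_i)\otimes U(\mathfrak h_j)$ (super tensor product) is induced by the embedding $Q(i)\oplus Q(j)\hookrightarrow Q(n)$: it sends $\xi_a\mapsto\xi_a\otimes1$ for $a\le i$ and $\xi_{i+b}\mapsto1\otimes\xi_b$ for $b\le j$. *)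

theory Defs
  imports Complex_Main "HOL-Library.Poly_Mapping"
begin

text \<open>Concrete model of U(h): the associative algebra over the complex numbers generated by
odd elements xi_a (a :: nat) with xi_a xi_b + xi_b xi_a = 0 for a ~= b.  A PBW basis is
given by monomials x^alpha xi_S (S a finite set, product taken in increasing order), where
x_a = xi_a^2 is central.
U(h_m) is the subalgebra of elements involving only xi_1,...,xi_m.\<close>

type_synonym hmono = "(nat \<Rightarrow>\<^sub>0 nat) \<times> nat set"
type_synonym uh = "hmono \<Rightarrow>\<^sub>0 complex"

text \<open>Product of basis monomials: xi_S xi_T = (-1)^inv(S,T) x^(S inter T) xi_(S symdiff T).\<close>
definition bkey :: "hmono \<Rightarrow> hmono \<Rightarrow> hmono" where
  "bkey p q = (fst p + fst q + (\<Sum>a\<in>snd p \<inter> snd q. Poly_Mapping.single a 1),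
               (snd p - snd q) \<union> (snd q - snd p))"

definition bsign :: "hmono \<Rightarrow> hmono \<Rightarrow> complex" where
  "bsign p q = (-1) ^ card {(s, t). s \<in> snd p \<and> t \<in> snd q \<and> t < s}"

definition hmul :: "uh \<Rightarrow> uh \<Rightarrow> uh" where
  "hmul f g = (\<Sum>p\<in>Poly_Mapping.keys f. \<Sum>q\<in>Poly_Mapping.keys g.
      Poly_Mapping.single (bkey p q) (Poly_Mapping.lookup f p * Poly_Mapping.lookup g q * bsign p q))"

definition hone :: uh where "hone = Poly_Mapping.single (0, {}) 1"

definition hscale :: "complex \<Rightarrow> uh \<Rightarrow> uh" where
  "hscale c f = Poly_Mapping.map (\<lambda>v. c * v) f"

definition xi :: "nat \<Rightarrow> uh" where "xi a = Poly_Mapping.single (0, {a}) 1"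
definition xsq :: "nat \<Rightarrow> uh" where "xsq a = hmul (xi a) (xi a)"

fun hprod :: "uh list \<Rightarrow> uh" where
  "hprod [] = hone"
| "hprod (f # fs) = hmul f (hprod fs)"

definition ufac :: "nat \<Rightarrow> nat set \<Rightarrow> uh" where
  "ufac k I = (let s = sorted_list_of_set I in
     hprod (map (\<lambda>l. xsq (s ! (l - 1)) + hscale ((-1) ^ (k - l)) (xi (s ! (l - 1)))) [1..<k+1]))"

definition ufull :: "nat \<Rightarrow> nat \<Rightarrow> uh" where
  "ufull m k = (\<Sum>I\<in>{I. I \<subseteq> {1..m} \<and> card I = k}. ufac k I)"

definition hpart :: "nat \<Rightarrow> uh \<Rightarrow> uh" where
  "hpart e f = (\<Sum>p\<in>{p\<in>Poly_Mapping.keys f. card (snd p) mod 2 = e}. Poly_Mapping.single p (Poly_Mapping.lookup f p))"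

definition u :: "nat \<Rightarrow> nat \<Rightarrow> nat \<Rightarrow> uh" where
  "u m k e = hpart e (ufull m k)"

inductive_set W :: "nat \<Rightarrow> uh set" for m :: nat where
  gen: "1 \<le> k \<Longrightarrow> k \<le> m \<Longrightarrow> e \<in> {0, 1} \<Longrightarrow> u m k e \<in> W m"
| one: "hone \<in> W m"
| add: "f \<in> W m \<Longrightarrow> g \<in> W m \<Longrightarrow> f + g \<in> W m"
| scale: "f \<in> W m \<Longrightarrow> hscale c f \<in> W m"
| mul: "f \<in> W m \<Longrightarrow> g \<in> W m \<Longrightarrow> hmul f g \<in> W m"

text \<open>Shift xi_b |-> xi_{i+b} (and x_b |-> x_{i+b}): the embedding U(h_j) -> U(h_n) as 1 (x) U(h_j).\<close>
definition shkey :: "nat \<Rightarrow> hmono \<Rightarrow> hmono" where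
  "shkey i p = ((\<Sum>a\<in>Poly_Mapping.keys (fst p). Poly_Mapping.single (i + a) (Poly_Mapping.lookup (fst p) a)), (\<lambda>a. i + a) ` snd p)"

definition sh :: "nat \<Rightarrow> uh \<Rightarrow> uh" where
  "sh i f = (\<Sum>p\<in>Poly_Mapping.keys f. Poly_Mapping.single (shkey i p) (Poly_Mapping.lookup f p))"

inductive_set hspan :: "uh set \<Rightarrow> uh set" for S :: "uh set" where
  zero: "0 \<in> hspan S"
| base: "f \<in> S \<Longrightarrow> f \<in> hspan S"
| add: "f \<in> hspan S \<Longrightarrow> g \<in> hspan S \<Longrightarrow> f + g \<in> hspan S"
| scale: "f \<in> hspan S \<Longrightarrow> hscale c f \<in> hspan S"

text \<open>Image of W^i (x) W^j under U(h_i) (x) U(h_j) ~= U(h_{i+j}), a (x) b |-> a * sh i b.\<close>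
definition Wtensor :: "nat \<Rightarrow> nat \<Rightarrow> uh set" where
  "Wtensor i j = hspan {hmul a (sh i b) | a b. a \<in> W i \<and> b \<in> W j}"

end

theory Submission
  imports Defs
begin

(*
  Write sigma for the parity automorphism (identity on even, -1 on odd elements) and tau for
  the shift xi_b |-> xi_(i+b), which embeds U(h_j) as 1 (x) U(h_j).  Cutting a k-subset of
  {1..i+j} into its parts below and above i, the first a factors of the corresponding product
  carry the signs of an a-fold product twisted by sigma^(k-a).  This gives the coproduct formula
      ufull (i+j) k = sum_a sigma^(k-a) (ufull i a) * tau (ufull j (k-a)).
  W(i) is stable under sigma and under taking parity parts, so the parity parts u_k(e) of the
  left side lie in the span of W(i) * tau W(j).  That span is a subalgebra, because tau W(j)
  supercommutes with W(i) (their odd generators are disjoint); hence it contains W(i+j).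
*)

section \<open>The product of U(h)\<close>

lemma lookup_hscale [simp]: "Poly_Mapping.lookup (hscale c f) p = c * Poly_Mapping.lookup f p"
  unfolding hscale_def by transfer (simp add: when_def)

lemma keys_hscale_subset: "Poly_Mapping.keys (hscale c f) \<subseteq> Poly_Mapping.keys f"
  by (auto simp: in_keys_iff)

lemma hscale_add: "hscale c (f + g) = hscale c f + hscale c g"
  by (rule poly_mapping_eqI) (simp add: lookup_add algebra_simps)

lemma hscale_zero_right [simp]: "hscale c 0 = 0"
  by (rule poly_mapping_eqI) simp

lemma hscale_zero_left [simp]: "hscale 0 f = 0"
  by (rule poly_mapping_eqI) simp

lemma hscale_one [simp]: "hscale 1 f = f"
  by (rule poly_mapping_eqI) simp

lemma hscale_hscale [simp]: "hscale c (hscale d f) = hscale (c * d) f"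
  by (rule poly_mapping_eqI) simp

lemma hscale_sum: "hscale c (sum F X) = (\<Sum>x\<in>X. hscale c (F x))"
  by (induction X rule: infinite_finite_induct) (auto simp: hscale_add)

lemma hscale_single: "hscale c (Poly_Mapping.single k a) = Poly_Mapping.single k (c * a)"
  by (rule poly_mapping_eqI) (simp add: lookup_single when_def)

lemma poly_mapping_sum_single:
  "(\<Sum>p\<in>Poly_Mapping.keys f. Poly_Mapping.single p (Poly_Mapping.lookup f p)) = f"
  by (rule poly_mapping_eqI) (auto simp: lookup_sum lookup_single when_def in_keys_iff)

definition coeff_extend :: "(hmono \<Rightarrow> complex \<Rightarrow> uh) \<Rightarrow> uh \<Rightarrow> uh" where
  "coeff_extend \<Phi> f = (\<Sum>p\<in>Poly_Mapping.keys f. \<Phi> p (Poly_Mapping.lookup f p))"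

definition coeff_additive :: "(hmono \<Rightarrow> complex \<Rightarrow> uh) \<Rightarrow> bool" where
  "coeff_additive \<Phi> \<longleftrightarrow> (\<forall>p a b. \<Phi> p (a + b) = \<Phi> p a + \<Phi> p b)"

lemma coeff_additiveD: "coeff_additive \<Phi> \<Longrightarrow> \<Phi> p (a + b) = \<Phi> p a + \<Phi> p b"
  unfolding coeff_additive_def by blast

lemma coeff_additive_zero: "coeff_additive \<Phi> \<Longrightarrow> \<Phi> p 0 = 0"
  using coeff_additiveD[of \<Phi> p 0 0] by simp

lemma coeff_extend_eq_sum:
  assumes "coeff_additive \<Phi>" "finite P" "Poly_Mapping.keys f \<subseteq> P"
  shows "coeff_extend \<Phi> f = (\<Sum>p\<in>P. \<Phi> p (Poly_Mapping.lookup f p))"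
  unfolding coeff_extend_def
  by (rule sum.mono_neutral_left) (use assms coeff_additive_zero in \<open>auto simp: in_keys_iff\<close>)

lemma coeff_extend_add:
  assumes "coeff_additive \<Phi>"
  shows "coeff_extend \<Phi> (f + g) = coeff_extend \<Phi> f + coeff_extend \<Phi> g"
proof -
  let ?P = "Poly_Mapping.keys f \<union> Poly_Mapping.keys g"
  have "Poly_Mapping.keys (f + g) \<subseteq> ?P" by (rule keys_add)
  with assms show ?thesis
    by (simp add: coeff_extend_eq_sum[of \<Phi> ?P] lookup_add sum.distrib coeff_additiveD)
qed

lemma coeff_extend_zero [simp]: "coeff_extend \<Phi> 0 = 0"
  by (simp add: coeff_extend_def)

lemma coeff_extend_sum:
  "coeff_additive \<Phi> \<Longrightarrow> coeff_extend \<Phi> (sum F X) = (\<Sum>x\<in>X. coeff_extend \<Phi> (F x))"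
  by (induction X rule: infinite_finite_induct) (auto simp: coeff_extend_add)

lemma coeff_extend_single:
  "coeff_additive \<Phi> \<Longrightarrow> coeff_extend \<Phi> (Poly_Mapping.single k c) = \<Phi> k c"
  using coeff_extend_eq_sum[of \<Phi> "{k}" "Poly_Mapping.single k c"] by simp

lemma coeff_extend_hscale:
  assumes "coeff_additive \<Phi>" "\<And>p d. \<Phi> p (c * d) = hscale c (\<Phi> p d)"
  shows "coeff_extend \<Phi> (hscale c f) = hscale c (coeff_extend \<Phi> f)"
proof -
  have "coeff_extend \<Phi> (hscale c f) =
      (\<Sum>p\<in>Poly_Mapping.keys f. \<Phi> p (Poly_Mapping.lookup (hscale c f) p))"
    by (rule coeff_extend_eq_sum[OF assms(1) _ keys_hscale_subset]) simp
  then show ?thesis by (simp add: coeff_extend_def hscale_sum assms(2))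
qed

lemma coeff_extend_plus_fun:
  "coeff_extend (\<lambda>p a. \<Phi> p a + \<Psi> p a) f = coeff_extend \<Phi> f + coeff_extend \<Psi> f"
  by (simp add: coeff_extend_def sum.distrib)

lemma coeff_extend_hscale_fun:
  "coeff_extend (\<lambda>p a. hscale c (\<Phi> p a)) f = hscale c (coeff_extend \<Phi> f)"
  by (simp add: coeff_extend_def hscale_sum)

definition mono_mul :: "hmono \<Rightarrow> complex \<Rightarrow> hmono \<Rightarrow> complex \<Rightarrow> uh" where
  "mono_mul p a q b = Poly_Mapping.single (bkey p q) (a * b * bsign p q)"

lemma coeff_additive_mono_mul: "coeff_additive (mono_mul p a)"
  by (simp add: coeff_additive_def mono_mul_def algebra_simps single_add)

lemma mono_mul_add: "mono_mul p (a + a') = (\<lambda>q b. mono_mul p a q b + mono_mul p a' q b)"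
  by (simp add: fun_eq_iff mono_mul_def algebra_simps single_add)

lemma coeff_additive_mono_mul_left: "coeff_additive (\<lambda>p a. coeff_extend (mono_mul p a) g)"
  by (simp add: coeff_additive_def mono_mul_add coeff_extend_plus_fun)

lemma hmul_eq_coeff_extend: "hmul f g = coeff_extend (\<lambda>p a. coeff_extend (mono_mul p a) g) f"
  by (simp add: hmul_def coeff_extend_def mono_mul_def)

lemma hmul_add_left: "hmul (f + f') g = hmul f g + hmul f' g"
  by (simp add: hmul_eq_coeff_extend coeff_extend_add[OF coeff_additive_mono_mul_left])

lemma hmul_add_right: "hmul f (g + g') = hmul f g + hmul f g'"
  by (simp add: hmul_eq_coeff_extend coeff_extend_add[OF coeff_additive_mono_mul]
      coeff_extend_plus_fun)

lemma hmul_zero_left [simp]: "hmul 0 g = 0"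
  by (simp add: hmul_def)

lemma hmul_zero_right [simp]: "hmul f 0 = 0"
  by (simp add: hmul_def)

lemma hmul_sum_left: "hmul (sum F X) g = (\<Sum>x\<in>X. hmul (F x) g)"
  by (induction X rule: infinite_finite_induct) (auto simp: hmul_add_left)

lemma hmul_sum_right: "hmul f (sum F X) = (\<Sum>x\<in>X. hmul f (F x))"
  by (induction X rule: infinite_finite_induct) (auto simp: hmul_add_right)

lemma mono_mul_scale: "mono_mul p (c * a) = (\<lambda>q b. hscale c (mono_mul p a q b))"
  by (simp add: fun_eq_iff mono_mul_def hscale_single algebra_simps)

lemma hmul_hscale_left: "hmul (hscale c f) g = hscale c (hmul f g)"
  unfolding hmul_eq_coeff_extend
  by (rule coeff_extend_hscale[OF coeff_additive_mono_mul_left])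
     (simp add: mono_mul_scale coeff_extend_hscale_fun)

lemma hmul_hscale_right: "hmul f (hscale c g) = hscale c (hmul f g)"
proof -
  have "coeff_extend (mono_mul p a) (hscale c g) = hscale c (coeff_extend (mono_mul p a) g)"
    for p a
    by (rule coeff_extend_hscale[OF coeff_additive_mono_mul])
       (simp add: mono_mul_def hscale_single algebra_simps)
  then show ?thesis
    unfolding hmul_eq_coeff_extend by (simp add: coeff_extend_hscale_fun)
qed

lemma hmul_single: "hmul (Poly_Mapping.single p a) (Poly_Mapping.single q b) =
   Poly_Mapping.single (bkey p q) (a * b * bsign p q)"
proof -
  have "coeff_additive (\<lambda>p a. Poly_Mapping.single (bkey p q) (a * b * bsign p q))"
    by (simp add: coeff_additive_def algebra_simps single_add)
  then show ?thesis
    by (simp add: hmul_eq_coeff_extend coeff_extend_single coeff_additive_mono_mul_left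
        coeff_additive_mono_mul mono_mul_def)
qed

lemma hmul_eq_sum_singles:
  "hmul f g = (\<Sum>p\<in>Poly_Mapping.keys f. \<Sum>q\<in>Poly_Mapping.keys g.
     hmul (Poly_Mapping.single p (Poly_Mapping.lookup f p))
          (Poly_Mapping.single q (Poly_Mapping.lookup g q)))"
  unfolding hmul_single unfolding hmul_def ..

lemma keys_hmul_subset: "Poly_Mapping.keys (hmul f g) \<subseteq>
   {bkey p q | p q. p \<in> Poly_Mapping.keys f \<and> q \<in> Poly_Mapping.keys g}"
proof -
  have "Poly_Mapping.keys (hmul f g) \<subseteq> (\<Union>p\<in>Poly_Mapping.keys f. \<Union>q\<in>Poly_Mapping.keys g.
     Poly_Mapping.keys (Poly_Mapping.single (bkey p q)
       (Poly_Mapping.lookup f p * Poly_Mapping.lookup g q * bsign p q)))"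
    unfolding hmul_def by (rule order.trans[OF keys_sum UN_mono[OF order_refl keys_sum]])
  also have "\<dots> \<subseteq> {bkey p q | p q. p \<in> Poly_Mapping.keys f \<and> q \<in> Poly_Mapping.keys g}"
    by auto
  finally show ?thesis .
qed

definition inv_sign :: "nat \<Rightarrow> nat \<Rightarrow> complex" where
  "inv_sign s t = (if t < s then -1 else 1)"

definition cross_sign :: "nat set \<Rightarrow> nat set \<Rightarrow> complex" where
  "cross_sign S T = (\<Prod>s\<in>S. \<Prod>t\<in>T. inv_sign s t)"

lemma bsign_eq_cross_sign:
  assumes "finite (snd p)" "finite (snd q)"
  shows "bsign p q = cross_sign (snd p) (snd q)"
proof -
  let ?S = "snd p" and ?T = "snd q"
  have "{(s, t). s \<in> ?S \<and> t \<in> ?T \<and> t < s} = (SIGMA s:?S. {t\<in>?T. t < s})" by auto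
  then have "bsign p q = (\<Prod>_\<in>(SIGMA s:?S. {t\<in>?T. t < s}). (-1::complex))"
    unfolding bsign_def by simp
  also have "\<dots> = (\<Prod>s\<in>?S. \<Prod>t\<in>{t\<in>?T. t < s}. (-1::complex))"
    using prod.Sigma[of ?S "\<lambda>s. {t\<in>?T. t < s}" "\<lambda>_ _. -1::complex"] assms
    by (simp add: split_def)
  also have "\<dots> = cross_sign ?S ?T"
    unfolding cross_sign_def inv_sign_def
    by (rule prod.cong[OF refl], subst prod.inter_filter) (use assms in auto)
  finally show ?thesis .
qed

lemma prod_symdiff_involutive:
  fixes h :: "nat \<Rightarrow> complex"
  assumes "finite A" "finite B" "\<And>x. h x * h x = 1"
  shows "prod h ((A - B) \<union> (B - A)) = prod h A * prod h B"
proof -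
  have A: "prod h A = prod h (A - B) * prod h (A \<inter> B)"
    and B: "prod h B = prod h (B - A) * prod h (A \<inter> B)"
    using assms by (metis Int_Diff_Un Int_Diff_disjoint finite_Int finite_Diff
        prod.union_disjoint Un_commute inf_commute mult.commute)+
  have "prod h (A \<inter> B) * prod h (A \<inter> B) = 1"
    by (simp add: prod.distrib[symmetric] assms(3))
  moreover have "prod h ((A - B) \<union> (B - A)) = prod h (A - B) * prod h (B - A)"
    by (rule prod.union_disjoint) (use assms in auto)
  ultimately show ?thesis by (simp add: A B algebra_simps)
qed

lemma inv_sign_sq [simp]: "inv_sign s t * inv_sign s t = 1"
  by (simp add: inv_sign_def)

lemma cross_sign_symdiff_left:
  assumes "finite A" "finite B" "finite C"
  shows "cross_sign ((A - B) \<union> (B - A)) C = cross_sign A C * cross_sign B C"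
  unfolding cross_sign_def
  by (rule prod_symdiff_involutive)
     (use assms in \<open>auto simp: prod.distrib[symmetric]\<close>)

lemma cross_sign_symdiff_right:
  assumes "finite A" "finite B" "finite C"
  shows "cross_sign C ((A - B) \<union> (B - A)) = cross_sign C A * cross_sign C B"
  unfolding cross_sign_def
  by (simp add: prod_symdiff_involutive assms prod.distrib[symmetric])

definition indicator_pm :: "nat set \<Rightarrow> (nat \<Rightarrow>\<^sub>0 nat)" where
  "indicator_pm A = (\<Sum>a\<in>A. Poly_Mapping.single a 1)"

lemma lookup_indicator_pm:
  "finite A \<Longrightarrow> Poly_Mapping.lookup (indicator_pm A) x = (if x \<in> A then 1 else 0)"
  unfolding indicator_pm_def lookup_sum by (simp add: lookup_single when_def)

lemma bkey_assoc:
  assumes "finite (snd p)" "finite (snd q)" "finite (snd r)"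
  shows "bkey (bkey p q) r = bkey p (bkey q r)"
proof -
  let ?P = "snd p" and ?Q = "snd q" and ?R = "snd r"
  have "indicator_pm (?P \<inter> ?Q) + indicator_pm (((?P - ?Q) \<union> (?Q - ?P)) \<inter> ?R)
     = indicator_pm (?Q \<inter> ?R) + indicator_pm (?P \<inter> ((?Q - ?R) \<union> (?R - ?Q)))"
    by (rule poly_mapping_eqI) (simp add: lookup_add lookup_indicator_pm assms)
  then show ?thesis
    unfolding bkey_def indicator_pm_def[symmetric] by (auto simp: algebra_simps)
qed

lemma bsign_assoc:
  assumes "finite (snd p)" "finite (snd q)" "finite (snd r)"
  shows "bsign p q * bsign (bkey p q) r = bsign q r * bsign p (bkey q r)"
  using assms by (simp add: bsign_eq_cross_sign bkey_def cross_sign_symdiff_left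
      cross_sign_symdiff_right)

text \<open>A value of type uh may have monomials with infinitely many odd generators; the
  product is associative only away from such junk monomials.\<close>

definition odd_finite :: "uh \<Rightarrow> bool" where
  "odd_finite f \<longleftrightarrow> (\<forall>p\<in>Poly_Mapping.keys f. finite (snd p))"

lemma hmul_assoc:
  assumes "odd_finite f" "odd_finite g" "odd_finite h"
  shows "hmul (hmul f g) h = hmul f (hmul g h)"
proof -
  define s where "s f p = Poly_Mapping.single p (Poly_Mapping.lookup f p)" for f :: uh and p
  have expand: "sum (s f) (Poly_Mapping.keys f) = f" for f
    unfolding s_def by (rule poly_mapping_sum_single)
  have single_assoc: "hmul (hmul (s f p) (s g q)) (s h r) = hmul (s f p) (hmul (s g q) (s h r))"
    if "finite (snd p)" "finite (snd q)" "finite (snd r)" for p q r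
  proof -
    have "a * b * bsign p q * c * bsign (bkey p q) r = a * (b * c * bsign q r) * bsign p (bkey q r)"
      for a b c
      using bsign_assoc[OF that] by (simp add: algebra_simps)
    then show ?thesis by (simp only: s_def hmul_single bkey_assoc[OF that])
  qed
  have left: "hmul f' x = (\<Sum>p\<in>Poly_Mapping.keys f'. hmul (s f' p) x)"
    and right: "hmul x f' = (\<Sum>p\<in>Poly_Mapping.keys f'. hmul x (s f' p))" for f' x
    by (simp only: hmul_sum_right[symmetric] hmul_sum_left[symmetric] expand)+
  have "hmul (hmul f g) h = (\<Sum>p\<in>Poly_Mapping.keys f. \<Sum>q\<in>Poly_Mapping.keys g.
      \<Sum>r\<in>Poly_Mapping.keys h. hmul (hmul (s f p) (s g q)) (s h r))"
    by (simp only: left[of f] hmul_sum_left, simp only: right[of _ g] hmul_sum_left,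
        simp only: right[of _ h])
  also have "\<dots> = (\<Sum>p\<in>Poly_Mapping.keys f. \<Sum>q\<in>Poly_Mapping.keys g.
      \<Sum>r\<in>Poly_Mapping.keys h. hmul (s f p) (hmul (s g q) (s h r)))"
    using assms unfolding odd_finite_def by (intro sum.cong refl single_assoc) auto
  also have "\<dots> = hmul f (hmul g h)"
    by (simp only: left[of f], simp only: left[of g] hmul_sum_right,
        simp only: right[of _ h] hmul_sum_right)
  finally show ?thesis .
qed

lemma bsign_empty_left [simp]: "bsign (m, {}) q = 1"
  by (simp add: bsign_def)

lemma bsign_empty_right [simp]: "bsign p (m, {}) = 1"
  by (simp add: bsign_def)

lemma hmul_hone_left [simp]: "hmul hone f = f"
proof -
  have "hmul hone f = (\<Sum>p\<in>Poly_Mapping.keys f.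
      hmul hone (Poly_Mapping.single p (Poly_Mapping.lookup f p)))"
    by (subst poly_mapping_sum_single[symmetric, of f]) (simp only: hmul_sum_right)
  also have "\<dots> = f"
    by (simp add: hone_def hmul_single bkey_def poly_mapping_sum_single)
  finally show ?thesis .
qed

lemma odd_finite_hmul: "odd_finite f \<Longrightarrow> odd_finite g \<Longrightarrow> odd_finite (hmul f g)"
  using keys_hmul_subset[of f g] unfolding odd_finite_def bkey_def by fastforce

lemma odd_finite_add: "odd_finite f \<Longrightarrow> odd_finite g \<Longrightarrow> odd_finite (f + g)"
  using keys_add[of f g] by (auto simp: odd_finite_def)

lemma odd_finite_hscale: "odd_finite f \<Longrightarrow> odd_finite (hscale c f)"
  using keys_hscale_subset[of c f] by (auto simp: odd_finite_def)

lemma odd_finite_hone: "odd_finite hone"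
  by (simp add: odd_finite_def hone_def)

lemma xsq_eq_single: "xsq a = Poly_Mapping.single (Poly_Mapping.single a 1, {}) 1"
  by (simp add: xsq_def xi_def hmul_single bkey_def bsign_eq_cross_sign cross_sign_def
      inv_sign_def)

lemma odd_finite_xi: "odd_finite (xi a)"
  by (simp add: odd_finite_def xi_def)

lemma odd_finite_xsq: "odd_finite (xsq a)"
  by (simp add: odd_finite_def xsq_eq_single)

section \<open>Parity\<close>

lemma lookup_hpart:
  "Poly_Mapping.lookup (hpart e f) p =
     (if card (snd p) mod 2 = e then Poly_Mapping.lookup f p else 0)"
proof -
  have "Poly_Mapping.lookup (hpart e f) p = (\<Sum>q\<in>{q \<in> Poly_Mapping.keys f. card (snd q) mod 2 = e}.
      (Poly_Mapping.lookup f q when q = p))"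
    unfolding hpart_def lookup_sum by (simp add: lookup_single)
  also have "\<dots> = (if card (snd p) mod 2 = e then Poly_Mapping.lookup f p else 0)"
    by (auto simp: when_def in_keys_iff)
  finally show ?thesis .
qed

lemma hpart_add: "hpart e (f + g) = hpart e f + hpart e g"
  by (rule poly_mapping_eqI) (simp add: lookup_hpart lookup_add)

lemma hpart_zero [simp]: "hpart e 0 = 0"
  by (rule poly_mapping_eqI) (simp add: lookup_hpart)

lemma hpart_sum: "hpart e (sum F X) = (\<Sum>x\<in>X. hpart e (F x))"
  by (induction X rule: infinite_finite_induct) (auto simp: hpart_add)

lemma hpart_hscale: "hpart e (hscale c f) = hscale c (hpart e f)"
  by (rule poly_mapping_eqI) (simp add: lookup_hpart)

lemma hpart_split: "hpart 0 f + hpart 1 f = f"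
  by (rule poly_mapping_eqI) (simp add: lookup_hpart lookup_add)

lemma sum_hpart: "(\<Sum>e<2. hpart e f) = f"
  using hpart_split[of f] by (simp add: numeral_2_eq_2)

lemma keys_hpart_subset: "Poly_Mapping.keys (hpart e f) \<subseteq> Poly_Mapping.keys f"
  by (auto simp: in_keys_iff lookup_hpart split: if_splits)

definition homogeneous :: "nat \<Rightarrow> uh \<Rightarrow> bool" where
  "homogeneous e f \<longleftrightarrow> (\<forall>p\<in>Poly_Mapping.keys f. card (snd p) mod 2 = e)"

lemma homogeneous_hpart: "homogeneous e (hpart e f)"
  by (auto simp: homogeneous_def in_keys_iff lookup_hpart split: if_splits)

lemma hpart_homogeneous: "homogeneous e f \<Longrightarrow> hpart e' f = (if e' = e then f else 0)"
  by (rule poly_mapping_eqI) (auto simp: homogeneous_def lookup_hpart in_keys_iff)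

lemma minus_one_power_mod_2: "(-1::complex) ^ (n mod 2) = (-1) ^ n"
  by (simp add: minus_one_power_iff)

lemma card_symdiff:
  assumes "finite S" "finite T"
  shows "card S + card T = card ((S - T) \<union> (T - S)) + 2 * card (S \<inter> T)"
proof -
  have "card S = card (S - T) + card (S \<inter> T)" "card T = card (T - S) + card (S \<inter> T)"
    using assms by (metis Int_Diff_Un Int_Diff_disjoint add.commute card_Un_disjoint
        finite_Diff finite_Int inf_commute)+
  moreover have "card ((S - T) \<union> (T - S)) = card (S - T) + card (T - S)"
    by (rule card_Un_disjoint) (use assms in auto)
  ultimately show ?thesis by simp
qed

lemma card_bkey_mod_2:
  assumes "finite (snd p)" "finite (snd q)"
  shows "card (snd (bkey p q)) mod 2 = (card (snd p) + card (snd q)) mod 2"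
  using card_symdiff[OF assms] by (simp add: bkey_def)

lemma homogeneous_hmul:
  assumes "odd_finite f" "odd_finite g" "homogeneous e f" "homogeneous e' g"
  shows "homogeneous ((e + e') mod 2) (hmul f g)"
  unfolding homogeneous_def
proof
  fix x assume "x \<in> Poly_Mapping.keys (hmul f g)"
  then obtain p q where x: "x = bkey p q"
    and p: "p \<in> Poly_Mapping.keys f" and q: "q \<in> Poly_Mapping.keys g"
    using keys_hmul_subset by blast
  have "finite (snd p)" "finite (snd q)"
    using assms p q by (auto simp: odd_finite_def)
  moreover have "card (snd p) mod 2 = e" "card (snd q) mod 2 = e'"
    using assms p q by (auto simp: homogeneous_def)
  ultimately show "card (snd x) mod 2 = (e + e') mod 2"
    unfolding x by (metis card_bkey_mod_2 mod_add_eq)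
qed

lemma homogeneous_hone: "homogeneous 0 hone"
  by (simp add: homogeneous_def hone_def)

lemma homogeneous_xi: "homogeneous 1 (xi a)"
  by (simp add: homogeneous_def xi_def)

lemma homogeneous_xsq: "homogeneous 0 (xsq a)"
  by (simp add: homogeneous_def xsq_eq_single)

lemma odd_finite_hpart: "odd_finite f \<Longrightarrow> odd_finite (hpart e f)"
  using keys_hpart_subset[of e f] by (auto simp: odd_finite_def)

section \<open>Monomial maps: shift and parity automorphism\<close>

definition mono_map :: "(hmono \<Rightarrow> hmono) \<Rightarrow> (hmono \<Rightarrow> complex) \<Rightarrow> uh \<Rightarrow> uh" where
  "mono_map \<kappa> \<chi> f =
     (\<Sum>p\<in>Poly_Mapping.keys f. Poly_Mapping.single (\<kappa> p) (\<chi> p * Poly_Mapping.lookup f p))"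

lemma coeff_additive_mono_map: "coeff_additive (\<lambda>p c. Poly_Mapping.single (\<kappa> p) (\<chi> p * c))"
  by (simp add: coeff_additive_def algebra_simps single_add)

lemma mono_map_eq_coeff_extend:
  "mono_map \<kappa> \<chi> = coeff_extend (\<lambda>p c. Poly_Mapping.single (\<kappa> p) (\<chi> p * c))"
  by (simp add: fun_eq_iff mono_map_def coeff_extend_def)

lemma mono_map_add: "mono_map \<kappa> \<chi> (f + g) = mono_map \<kappa> \<chi> f + mono_map \<kappa> \<chi> g"
  by (simp add: mono_map_eq_coeff_extend coeff_extend_add[OF coeff_additive_mono_map])

lemma mono_map_sum: "mono_map \<kappa> \<chi> (sum F X) = (\<Sum>x\<in>X. mono_map \<kappa> \<chi> (F x))"
  by (simp add: mono_map_eq_coeff_extend coeff_extend_sum[OF coeff_additive_mono_map])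

lemma mono_map_single:
  "mono_map \<kappa> \<chi> (Poly_Mapping.single p c) = Poly_Mapping.single (\<kappa> p) (\<chi> p * c)"
  by (simp add: mono_map_eq_coeff_extend coeff_extend_single[OF coeff_additive_mono_map])

lemma mono_map_hscale: "mono_map \<kappa> \<chi> (hscale c f) = hscale c (mono_map \<kappa> \<chi> f)"
  unfolding mono_map_eq_coeff_extend
  by (rule coeff_extend_hscale[OF coeff_additive_mono_map]) (simp add: hscale_single algebra_simps)

lemma keys_mono_map_subset: "Poly_Mapping.keys (mono_map \<kappa> \<chi> f) \<subseteq> \<kappa> ` Poly_Mapping.keys f"
proof -
  have "Poly_Mapping.keys (mono_map \<kappa> \<chi> f) \<subseteq> (\<Union>p\<in>Poly_Mapping.keys f.
      Poly_Mapping.keys (Poly_Mapping.single (\<kappa> p) (\<chi> p * Poly_Mapping.lookup f p)))"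
    unfolding mono_map_def by (rule keys_sum)
  then show ?thesis by auto
qed

lemma mono_map_hmul:
  assumes bkey: "\<And>p q. finite (snd p) \<Longrightarrow> finite (snd q) \<Longrightarrow> \<kappa> (bkey p q) = bkey (\<kappa> p) (\<kappa> q)"
    and bsign: "\<And>p q. finite (snd p) \<Longrightarrow> finite (snd q) \<Longrightarrow> bsign (\<kappa> p) (\<kappa> q) = bsign p q"
    and mult: "\<And>p q. finite (snd p) \<Longrightarrow> finite (snd q) \<Longrightarrow> \<chi> (bkey p q) = \<chi> p * \<chi> q"
    and "odd_finite f" "odd_finite g"
  shows "mono_map \<kappa> \<chi> (hmul f g) = hmul (mono_map \<kappa> \<chi> f) (mono_map \<kappa> \<chi> g)"
proof -
  let ?s = "\<lambda>f p. Poly_Mapping.single p (Poly_Mapping.lookup f p)"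
  have "mono_map \<kappa> \<chi> (hmul f g) = (\<Sum>p\<in>Poly_Mapping.keys f. \<Sum>q\<in>Poly_Mapping.keys g.
      mono_map \<kappa> \<chi> (hmul (?s f p) (?s g q)))"
    by (subst hmul_eq_sum_singles) (simp only: mono_map_sum)
  also have "\<dots> = (\<Sum>p\<in>Poly_Mapping.keys f. \<Sum>q\<in>Poly_Mapping.keys g.
      hmul (Poly_Mapping.single (\<kappa> p) (\<chi> p * Poly_Mapping.lookup f p))
           (Poly_Mapping.single (\<kappa> q) (\<chi> q * Poly_Mapping.lookup g q)))"
    using assms(4,5) unfolding odd_finite_def
    by (intro sum.cong refl) (simp add: hmul_single mono_map_single bkey bsign mult algebra_simps)
  also have "\<dots> = hmul (mono_map \<kappa> \<chi> f) (mono_map \<kappa> \<chi> g)"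
    unfolding mono_map_def by (simp only: hmul_sum_left, simp only: hmul_sum_right)
  finally show ?thesis .
qed

lemma odd_finite_mono_map:
  assumes "\<And>p. finite (snd p) \<Longrightarrow> finite (snd (\<kappa> p))" "odd_finite f"
  shows "odd_finite (mono_map \<kappa> \<chi> f)"
  unfolding odd_finite_def
proof
  fix x assume "x \<in> Poly_Mapping.keys (mono_map \<kappa> \<chi> f)"
  then obtain p where "p \<in> Poly_Mapping.keys f" "x = \<kappa> p"
    using keys_mono_map_subset by blast
  then show "finite (snd x)" using assms by (auto simp: odd_finite_def)
qed

lemma homogeneous_mono_map:
  assumes "\<And>p. card (snd (\<kappa> p)) = card (snd p)" "homogeneous e f"
  shows "homogeneous e (mono_map \<kappa> \<chi> f)"
  unfolding homogeneous_def
proof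
  fix x assume "x \<in> Poly_Mapping.keys (mono_map \<kappa> \<chi> f)"
  then obtain p where "p \<in> Poly_Mapping.keys f" "x = \<kappa> p"
    using keys_mono_map_subset by blast
  then show "card (snd x) mod 2 = e" using assms by (auto simp: homogeneous_def)
qed

definition shift_exp :: "nat \<Rightarrow> (nat \<Rightarrow>\<^sub>0 nat) \<Rightarrow> (nat \<Rightarrow>\<^sub>0 nat)" where
  "shift_exp i m = (\<Sum>a\<in>Poly_Mapping.keys m. Poly_Mapping.single (i + a) (Poly_Mapping.lookup m a))"

lemma lookup_shift_exp:
  "Poly_Mapping.lookup (shift_exp i m) x = (if i \<le> x then Poly_Mapping.lookup m (x - i) else 0)"
proof -
  have "Poly_Mapping.lookup (shift_exp i m) x =
      (\<Sum>a\<in>Poly_Mapping.keys m. if a = x - i \<and> i \<le> x then Poly_Mapping.lookup m a else 0)"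
    unfolding shift_exp_def lookup_sum by (intro sum.cong refl) (auto simp: lookup_single when_def)
  also have "\<dots> = (if i \<le> x then Poly_Mapping.lookup m (x - i) else 0)"
    by (cases "i \<le> x") (auto simp: in_keys_iff)
  finally show ?thesis .
qed

lemma shkey_eq: "shkey i p = (shift_exp i (fst p), (+) i ` snd p)"
  by (simp add: shkey_def shift_exp_def)

lemma shkey_bkey:
  assumes "finite (snd p)" "finite (snd q)"
  shows "shkey i (bkey p q) = bkey (shkey i p) (shkey i q)"
proof -
  have inj: "inj ((+) i)" by (simp add: inj_def)
  have "shift_exp i (indicator_pm A) = indicator_pm ((+) i ` A)" if "finite A" for A
  proof -
    have "x \<in> (+) i ` A \<longleftrightarrow> i \<le> x \<and> x - i \<in> A" for x
      by (auto intro: rev_image_eqI)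
    then show ?thesis
      by (intro poly_mapping_eqI) (simp add: lookup_indicator_pm that lookup_shift_exp)
  qed
  moreover have "shift_exp i (m1 + m2) = shift_exp i m1 + shift_exp i m2" for m1 m2
    by (rule poly_mapping_eqI) (simp add: lookup_shift_exp lookup_add)
  ultimately show ?thesis
    using assms inj unfolding bkey_def shkey_eq indicator_pm_def[symmetric]
    by (simp add: image_Int image_Un image_set_diff)
qed

lemma bsign_shkey:
  assumes "finite (snd p)" "finite (snd q)"
  shows "bsign (shkey i p) (shkey i q) = bsign p q"
proof -
  have "inj_on ((+) i) X" for X :: "nat set" by (simp add: inj_on_def)
  then show ?thesis
    using assms by (simp add: bsign_eq_cross_sign shkey_eq cross_sign_def prod.reindex inv_sign_def)
qed

lemma sh_eq_mono_map: "sh i = mono_map (shkey i) (\<lambda>_. 1)"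
  by (simp add: fun_eq_iff sh_def mono_map_def)

lemma sh_add: "sh i (f + g) = sh i f + sh i g"
  by (simp add: sh_eq_mono_map mono_map_add)

lemma sh_sum: "sh i (sum F X) = (\<Sum>x\<in>X. sh i (F x))"
  by (simp add: sh_eq_mono_map mono_map_sum)

lemma sh_hscale: "sh i (hscale c f) = hscale c (sh i f)"
  by (simp add: sh_eq_mono_map mono_map_hscale)

lemma sh_hmul: "odd_finite f \<Longrightarrow> odd_finite g \<Longrightarrow> sh i (hmul f g) = hmul (sh i f) (sh i g)"
  unfolding sh_eq_mono_map by (rule mono_map_hmul) (simp_all add: shkey_bkey bsign_shkey)

lemma card_snd_shkey: "card (snd (shkey i p)) = card (snd p)"
  by (simp add: shkey_eq card_image inj_on_def)

lemma odd_finite_sh: "odd_finite f \<Longrightarrow> odd_finite (sh i f)"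
  unfolding sh_eq_mono_map by (rule odd_finite_mono_map) (simp_all add: shkey_eq)

lemma homogeneous_sh: "homogeneous e f \<Longrightarrow> homogeneous e (sh i f)"
  unfolding sh_eq_mono_map by (rule homogeneous_mono_map) (simp_all add: card_snd_shkey)

lemma sh_hone [simp]: "sh i hone = hone"
  by (simp add: hone_def sh_eq_mono_map mono_map_single shkey_def)

lemma sh_xi: "sh i (xi a) = xi (i + a)"
  by (simp add: xi_def sh_eq_mono_map mono_map_single shkey_def)

lemma sh_xsq: "sh i (xsq a) = xsq (i + a)"
  by (simp add: xsq_eq_single sh_eq_mono_map mono_map_single shkey_def)

definition parity_aut :: "uh \<Rightarrow> uh" where
  "parity_aut = mono_map id (\<lambda>p. (-1) ^ card (snd p))"

lemma lookup_parity_aut: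
  "Poly_Mapping.lookup (parity_aut f) p = (-1) ^ card (snd p) * Poly_Mapping.lookup f p"
proof -
  have "Poly_Mapping.lookup (parity_aut f) p = (\<Sum>q\<in>Poly_Mapping.keys f.
      if q = p then (-1) ^ card (snd q) * Poly_Mapping.lookup f q else 0)"
    by (simp add: parity_aut_def mono_map_def lookup_sum lookup_single when_def eq_commute)
  then show ?thesis by (simp add: in_keys_iff)
qed

lemma parity_aut_eq_hpart: "parity_aut f = hpart 0 f + hscale (-1) (hpart 1 f)"
proof (rule poly_mapping_eqI)
  fix p
  show "Poly_Mapping.lookup (parity_aut f) p =
      Poly_Mapping.lookup (hpart 0 f + hscale (-1) (hpart 1 f)) p"
    by (cases "even (card (snd p))")
       (simp_all add: lookup_parity_aut lookup_hpart lookup_add even_iff_mod_2_eq_zero)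
qed

lemma parity_aut_homogeneous:
  assumes "homogeneous e f"
  shows "parity_aut f = hscale ((-1) ^ e) f"
proof (rule poly_mapping_eqI)
  fix p
  have "(-1) ^ card (snd p) = ((-1)::complex) ^ e" if "p \<in> Poly_Mapping.keys f"
    using assms that unfolding homogeneous_def by (metis minus_one_power_mod_2)
  then show "Poly_Mapping.lookup (parity_aut f) p = Poly_Mapping.lookup (hscale ((-1) ^ e) f) p"
    by (cases "p \<in> Poly_Mapping.keys f") (simp_all add: lookup_parity_aut in_keys_iff)
qed

lemma parity_aut_add: "parity_aut (f + g) = parity_aut f + parity_aut g"
  by (simp add: parity_aut_def mono_map_add)

lemma parity_aut_sum: "parity_aut (sum F X) = (\<Sum>x\<in>X. parity_aut (F x))"
  by (simp add: parity_aut_def mono_map_sum)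

lemma parity_aut_hscale: "parity_aut (hscale c f) = hscale c (parity_aut f)"
  by (simp add: parity_aut_def mono_map_hscale)

lemma minus_one_power_card_bkey:
  assumes "finite (snd p)" "finite (snd q)"
  shows "(-1::complex) ^ card (snd (bkey p q)) = (-1) ^ card (snd p) * (-1) ^ card (snd q)"
proof -
  have "(-1::complex) ^ card (snd p) * (-1) ^ card (snd q) =
      (-1) ^ (card (snd (bkey p q)) + 2 * card (snd p \<inter> snd q))"
    using card_symdiff[OF assms] by (simp add: bkey_def flip: power_add)
  then show ?thesis by (simp add: power_add power_mult)
qed

lemma parity_aut_hmul:
  "odd_finite f \<Longrightarrow> odd_finite g \<Longrightarrow> parity_aut (hmul f g) = hmul (parity_aut f) (parity_aut g)"
  unfolding parity_aut_def by (rule mono_map_hmul) (simp_all add: minus_one_power_card_bkey)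

lemma funpow_parity_aut_sum:
  "(parity_aut ^^ b) (sum F X) = (\<Sum>x\<in>X. (parity_aut ^^ b) (F x))"
  by (induction b) (simp_all add: parity_aut_sum)

section \<open>Supercommutation\<close>

lemma cross_sign_swap:
  assumes "finite S" "finite T" "S \<inter> T = {}"
  shows "cross_sign T S * cross_sign S T = (-1) ^ (card S * card T)"
proof -
  have "cross_sign T S * cross_sign S T = (\<Prod>s\<in>S. \<Prod>t\<in>T. inv_sign t s * inv_sign s t)"
    unfolding cross_sign_def by (simp add: prod.swap[of _ T] prod.distrib)
  also have "\<dots> = (\<Prod>s\<in>S. \<Prod>t\<in>T. -1)"
    using assms by (intro prod.cong refl) (auto simp: inv_sign_def)
  also have "\<dots> = (-1) ^ (card S * card T)"
    by (simp add: power_mult[symmetric] mult.commute)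
  finally show ?thesis .
qed

lemma bsign_swap:
  assumes "finite (snd p)" "finite (snd q)" "snd p \<inter> snd q = {}"
  shows "bsign q p = (-1) ^ (card (snd p) * card (snd q)) * bsign p q"
proof -
  have "bsign p q * bsign p q = 1"
    by (simp add: bsign_def power_mult_distrib[symmetric])
  moreover have "bsign q p * bsign p q = (-1) ^ (card (snd p) * card (snd q))"
    using assms by (simp add: bsign_eq_cross_sign cross_sign_swap)
  ultimately show ?thesis by (metis mult.assoc mult.right_neutral)
qed

lemma bkey_commute: "bkey p q = bkey q p"
  by (auto simp: bkey_def algebra_simps Int_commute Un_commute)

lemma hmul_supercommute:
  assumes "odd_finite f" "odd_finite g" "homogeneous e f" "homogeneous e' g"
    and disjoint: "\<And>p q. p \<in> Poly_Mapping.keys f \<Longrightarrow> q \<in> Poly_Mapping.keys g \<Longrightarrow>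
      snd p \<inter> snd q = {}"
  shows "hmul g f = hscale ((-1) ^ (e * e')) (hmul f g)"
proof -
  have swap: "bsign q p = (-1) ^ (e * e') * bsign p q"
    if p: "p \<in> Poly_Mapping.keys f" and q: "q \<in> Poly_Mapping.keys g" for p q
  proof -
    have "((-1)::complex) ^ (card (snd p) * card (snd q)) =
        (-1) ^ ((card (snd p) mod 2) * (card (snd q) mod 2))"
      by (simp add: minus_one_power_iff even_mult_iff)
    also have "\<dots> = (-1) ^ (e * e')"
      using assms p q by (simp add: homogeneous_def)
    finally show ?thesis
      using bsign_swap[OF _ _ disjoint[OF p q]] assms(1,2) p q by (simp add: odd_finite_def)
  qed
  have "hmul g f = (\<Sum>q\<in>Poly_Mapping.keys g. \<Sum>p\<in>Poly_Mapping.keys f.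
      hscale ((-1) ^ (e * e')) (Poly_Mapping.single (bkey p q)
        (Poly_Mapping.lookup f p * Poly_Mapping.lookup g q * bsign p q)))"
    unfolding hmul_def
    by (intro sum.cong refl) (simp add: swap hscale_single bkey_commute mult_ac)
  also have "\<dots> = hscale ((-1) ^ (e * e')) (hmul f g)"
    by (simp add: hmul_def hscale_sum sum.swap[of _ "Poly_Mapping.keys g"])
  finally show ?thesis .
qed

section \<open>The coproduct formula for the generators\<close>

definition ufactor :: "nat \<Rightarrow> nat \<Rightarrow> uh" where
  "ufactor e a = xsq a + hscale ((-1) ^ e) (xi a)"

text \<open>ufactor_prod b [a_1, ..., a_k] is the product over l of
  x_(a_l) + (-1)^(b + k - l) xi_(a_l).\<close>

fun ufactor_prod :: "nat \<Rightarrow> nat list \<Rightarrow> uh" where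
  "ufactor_prod b [] = hone"
| "ufactor_prod b (a # as) = hmul (ufactor (b + length as) a) (ufactor_prod b as)"

lemma odd_finite_ufactor: "odd_finite (ufactor e a)"
  by (simp add: ufactor_def odd_finite_add odd_finite_hscale odd_finite_xsq odd_finite_xi)

lemma odd_finite_ufactor_prod: "odd_finite (ufactor_prod b as)"
  by (induction as) (auto simp: odd_finite_hone odd_finite_hmul odd_finite_ufactor)

lemma hprod_eq_ufactor_prod:
  "length s = k \<Longrightarrow>
   hprod (map (\<lambda>l. xsq (s ! (l - 1)) + hscale ((-1) ^ (k - l)) (xi (s ! (l - 1)))) [1..<k+1]) =
   ufactor_prod 0 s"
proof (induction s arbitrary: k)
  case Nil
  then show ?case by simp
next
  case (Cons a as)
  then obtain m where k: "k = Suc m" and m: "length as = m" by auto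
  define F where
    "F = (\<lambda>l. xsq ((a # as) ! (l - 1)) + hscale ((-1) ^ (k - l)) (xi ((a # as) ! (l - 1))))"
  define G where "G = (\<lambda>l. xsq (as ! (l - 1)) + hscale ((-1) ^ (m - l)) (xi (as ! (l - 1))))"
  have upt: "[1..<k+1] = 1 # map Suc [1..<m+1]"
    by (simp add: k map_Suc_upt upt_conv_Cons del: upt_Suc)
  have map_F: "map F (map Suc [1..<m+1]) = map G [1..<m+1]"
    unfolding map_map by (rule map_cong[OF refl]) (auto simp: F_def G_def k)
  have "hprod (map F [1..<k+1]) = hmul (F 1) (hprod (map G [1..<m+1]))"
    by (simp only: upt list.map(2) map_F hprod.simps)
  also have "\<dots> = ufactor_prod 0 (a # as)"
    using Cons.IH[OF m] by (simp add: F_def G_def k m ufactor_def)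
  finally show ?case unfolding F_def .
qed

lemma ufac_eq_ufactor_prod: "finite I \<Longrightarrow> ufac (card I) I = ufactor_prod 0 (sorted_list_of_set I)"
  unfolding ufac_def Let_def by (rule hprod_eq_ufactor_prod) simp

lemma ufactor_prod_append:
  "ufactor_prod b (as @ bs) = hmul (ufactor_prod (b + length bs) as) (ufactor_prod b bs)"
  by (induction as) (simp_all add: hmul_assoc odd_finite_ufactor odd_finite_ufactor_prod algebra_simps)

lemma parity_aut_ufactor: "parity_aut (ufactor e a) = ufactor (Suc e) a"
  by (simp add: ufactor_def parity_aut_add parity_aut_hscale
      parity_aut_homogeneous[OF homogeneous_xsq] parity_aut_homogeneous[OF homogeneous_xi])

lemma ufactor_prod_Suc: "ufactor_prod (Suc b) as = parity_aut (ufactor_prod b as)"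
proof (induction as)
  case Nil
  show ?case by (simp add: parity_aut_homogeneous[OF homogeneous_hone])
next
  case (Cons a as)
  then show ?case
    by (simp add: parity_aut_hmul odd_finite_ufactor odd_finite_ufactor_prod parity_aut_ufactor)
qed

lemma ufactor_prod_eq_funpow: "ufactor_prod b as = (parity_aut ^^ b) (ufactor_prod 0 as)"
  by (induction b) (simp_all add: ufactor_prod_Suc)

lemma sh_ufactor: "sh i (ufactor e a) = ufactor e (i + a)"
  by (simp add: ufactor_def sh_add sh_hscale sh_xi sh_xsq)

lemma sh_ufactor_prod: "sh i (ufactor_prod b as) = ufactor_prod b (map ((+) i) as)"
  by (induction as) (simp_all add: sh_hmul odd_finite_ufactor odd_finite_ufactor_prod sh_ufactor)

lemma
  fixes I1 I2 :: "nat set"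
  assumes "I1 \<subseteq> {1..i}" "I2 \<subseteq> {1..j}"
  shows sorted_list_of_set_union_shift: "sorted_list_of_set (I1 \<union> (+) i ` I2) =
      sorted_list_of_set I1 @ map ((+) i) (sorted_list_of_set I2)"
    and card_union_shift: "card (I1 \<union> (+) i ` I2) = card I1 + card I2"
    and union_shift_inter: "(I1 \<union> (+) i ` I2) \<inter> {1..i} = I1"
    and union_shift_diff: "(\<lambda>x. x - i) ` ((I1 \<union> (+) i ` I2) - {1..i}) = I2"
proof -
  have fin: "finite I1" "finite I2"
    using assms by (auto intro: finite_subset)
  have disj: "I1 \<inter> (+) i ` I2 = {}"
    using assms by fastforce
  let ?L = "sorted_list_of_set I1 @ map ((+) i) (sorted_list_of_set I2)"
  have "sorted ?L" "distinct ?L"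
    using assms fin disj by (auto simp: sorted_append sorted_map distinct_map inj_on_def)
  then show "sorted_list_of_set (I1 \<union> (+) i ` I2) = ?L"
    using fin by (intro sorted_distinct_set_unique) auto
  show "card (I1 \<union> (+) i ` I2) = card I1 + card I2"
    using fin disj by (simp add: card_Un_disjoint card_image)
  show "(I1 \<union> (+) i ` I2) \<inter> {1..i} = I1"
    using assms by fastforce
  have "(I1 \<union> (+) i ` I2) - {1..i} = (+) i ` I2"
    using assms by fastforce
  then show "(\<lambda>x. x - i) ` ((I1 \<union> (+) i ` I2) - {1..i}) = I2"
    by (simp add: image_image)
qed

lemma
  fixes I :: "nat set"
  assumes "I \<subseteq> {1..i + j}"
  shows union_shift_split: "I \<inter> {1..i} \<union> (+) i ` ((\<lambda>x. x - i) ` (I - {1..i})) = I"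
    and diff_shift_subset: "(\<lambda>x. x - i) ` (I - {1..i}) \<subseteq> {1..j}"
proof -
  have "(+) i ` (\<lambda>x. x - i) ` (I - {1..i}) = I - {1..i}"
    using assms by (force simp: image_image intro: rev_image_eqI)
  then show "I \<inter> {1..i} \<union> (+) i ` ((\<lambda>x. x - i) ` (I - {1..i})) = I"
    by auto
  show "(\<lambda>x. x - i) ` (I - {1..i}) \<subseteq> {1..j}"
  proof clarify
    fix x assume "x \<in> I" "x \<notin> {1..i}"
    moreover from \<open>x \<in> I\<close> assms have "x \<in> {1..i + j}" by blast
    ultimately show "x - i \<in> {1..j}" by auto
  qed
qed

lemma ufac_union_shift:
  assumes "I1 \<subseteq> {1..i}" "I2 \<subseteq> {1..j}"
  shows "ufac (card I1 + card I2) (I1 \<union> (+) i ` I2) =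
    hmul ((parity_aut ^^ card I2) (ufac (card I1) I1)) (sh i (ufac (card I2) I2))"
proof -
  have fin: "finite I1" "finite I2" "finite (I1 \<union> (+) i ` I2)"
    using assms by (auto intro: finite_subset)
  have "ufac (card I1 + card I2) (I1 \<union> (+) i ` I2) =
      ufactor_prod 0 (sorted_list_of_set I1 @ map ((+) i) (sorted_list_of_set I2))"
    using ufac_eq_ufactor_prod[OF fin(3)]
    by (simp add: card_union_shift[OF assms] sorted_list_of_set_union_shift[OF assms])
  also have "\<dots> = hmul (ufactor_prod (card I2) (sorted_list_of_set I1))
      (ufactor_prod 0 (map ((+) i) (sorted_list_of_set I2)))"
    by (simp add: ufactor_prod_append)
  also have "\<dots> = hmul ((parity_aut ^^ card I2) (ufac (card I1) I1)) (sh i (ufac (card I2) I2))"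
    using fin by (simp add: ufactor_prod_eq_funpow[of "card I2"] sh_ufactor_prod ufac_eq_ufactor_prod)
  finally show ?thesis .
qed

definition card_subsets :: "nat \<Rightarrow> nat \<Rightarrow> nat set set" where
  "card_subsets m k = {I. I \<subseteq> {1..m} \<and> card I = k}"

lemma finite_card_subsets: "finite (card_subsets m k)"
  unfolding card_subsets_def by (rule finite_subset[of _ "Pow {1..m}"]) auto

lemma bij_betw_union_shift:
  "bij_betw (\<lambda>(a, I1, I2). I1 \<union> (+) i ` I2)
     (SIGMA a:{0..k}. card_subsets i a \<times> card_subsets j (k - a)) (card_subsets (i + j) k)"
  (is "bij_betw ?f ?S ?T")
proof -
  let ?g = "\<lambda>I. (card (I \<inter> {1..i}), I \<inter> {1..i}, (\<lambda>x. x - i) ` (I - {1..i}))"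
  have "?g (?f z) = z \<and> ?f z \<in> ?T" if "z \<in> ?S" for z
  proof -
    obtain a I1 I2 where z: "z = (a, I1, I2)" by (cases z) auto
    with that have sub: "I1 \<subseteq> {1..i}" "I2 \<subseteq> {1..j}"
      and "card I1 = a" "card I2 = k - a" "a \<le> k"
      by (auto simp: card_subsets_def)
    then show ?thesis
      using union_shift_inter[OF sub] union_shift_diff[OF sub] card_union_shift[OF sub]
      by (auto simp: z card_subsets_def)
  qed
  moreover have "?f (?g I) = I \<and> ?g I \<in> ?S" if "I \<in> ?T" for I
  proof -
    from that have sub: "I \<subseteq> {1..i + j}" and "card I = k"
      by (auto simp: card_subsets_def)
    moreover have "I \<inter> {1..i} \<subseteq> {1..i}" by simp
    from card_union_shift[OF this diff_shift_subset[OF sub]]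
    have "card I = card (I \<inter> {1..i}) + card ((\<lambda>x. x - i) ` (I - {1..i}))"
      by (simp only: union_shift_split[OF sub])
    ultimately show ?thesis
      using diff_shift_subset[OF sub] union_shift_split[OF sub]
      by (auto simp: card_subsets_def)
  qed
  ultimately show ?thesis
    by (intro bij_betw_byWitness[where f' = ?g]) auto
qed

lemma ufull_split:
  "ufull (i + j) k = (\<Sum>a\<in>{0..k}.
     hmul ((parity_aut ^^ (k - a)) (ufull i a)) (sh i (ufull j (k - a))))"
proof -
  let ?S = "SIGMA a:{0..k}. card_subsets i a \<times> card_subsets j (k - a)"
  have ufull_eq: "ufull m a = (\<Sum>I\<in>card_subsets m a. ufac a I)" for m a
    by (simp add: ufull_def card_subsets_def)
  have "(\<Sum>a\<in>{0..k}. hmul ((parity_aut ^^ (k - a)) (ufull i a)) (sh i (ufull j (k - a)))) =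
      (\<Sum>a\<in>{0..k}. \<Sum>I1\<in>card_subsets i a. \<Sum>I2\<in>card_subsets j (k - a).
        hmul ((parity_aut ^^ (k - a)) (ufac a I1)) (sh i (ufac (k - a) I2)))"
    by (simp only: ufull_eq funpow_parity_aut_sum sh_sum hmul_sum_left, simp only: hmul_sum_right)
  also have "\<dots> = (\<Sum>a\<in>{0..k}. \<Sum>I1\<in>card_subsets i a. \<Sum>I2\<in>card_subsets j (k - a).
      ufac k (I1 \<union> (+) i ` I2))"
  proof (intro sum.cong refl)
    fix a I1 I2 assume "a \<in> {0..k}" "I1 \<in> card_subsets i a" "I2 \<in> card_subsets j (k - a)"
    then show "hmul ((parity_aut ^^ (k - a)) (ufac a I1)) (sh i (ufac (k - a) I2)) =
        ufac k (I1 \<union> (+) i ` I2)"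
      using ufac_union_shift[of I1 i I2 j] by (simp add: card_subsets_def)
  qed
  also have "\<dots> = (\<Sum>(a, I1, I2)\<in>?S. ufac k (I1 \<union> (+) i ` I2))"
    by (simp only: sum.cartesian_product) (simp add: sum.Sigma finite_card_subsets)
  also have "\<dots> = ufull (i + j) k"
    unfolding ufull_eq sum.reindex_bij_betw[OF bij_betw_union_shift, symmetric]
    by (rule sum.cong) auto
  finally show ?thesis ..
qed

section \<open>W(m) and the tensor span\<close>

definition odd_within :: "nat \<Rightarrow> uh \<Rightarrow> bool" where
  "odd_within m f \<longleftrightarrow> (\<forall>p\<in>Poly_Mapping.keys f. snd p \<subseteq> {1..m})"

lemma odd_within_odd_finite: "odd_within m f \<Longrightarrow> odd_finite f"
  by (auto simp: odd_within_def odd_finite_def intro: finite_subset)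

lemma odd_within_hmul: "odd_within m f \<Longrightarrow> odd_within m g \<Longrightarrow> odd_within m (hmul f g)"
  using keys_hmul_subset[of f g] unfolding odd_within_def bkey_def by fastforce

lemma odd_within_add: "odd_within m f \<Longrightarrow> odd_within m g \<Longrightarrow> odd_within m (f + g)"
  using keys_add[of f g] by (auto simp: odd_within_def)

lemma odd_within_hscale: "odd_within m f \<Longrightarrow> odd_within m (hscale c f)"
  using keys_hscale_subset[of c f] by (auto simp: odd_within_def)

lemma odd_within_zero: "odd_within m 0"
  by (simp add: odd_within_def)

lemma odd_within_sum: "(\<And>x. x \<in> X \<Longrightarrow> odd_within m (F x)) \<Longrightarrow> odd_within m (sum F X)"
  by (induction X rule: infinite_finite_induct) (auto simp: odd_within_zero odd_within_add)

lemma odd_within_hpart: "odd_within m f \<Longrightarrow> odd_within m (hpart e f)"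
  using keys_hpart_subset[of e f] by (auto simp: odd_within_def)

lemma odd_within_hone: "odd_within m hone"
  by (simp add: odd_within_def hone_def)

lemma odd_within_xi: "a \<in> {1..m} \<Longrightarrow> odd_within m (xi a)"
  by (simp add: odd_within_def xi_def)

lemma odd_within_xsq: "odd_within m (xsq a)"
  by (simp add: odd_within_def xsq_eq_single)

lemma odd_within_hprod: "(\<And>x. x \<in> set xs \<Longrightarrow> odd_within m x) \<Longrightarrow> odd_within m (hprod xs)"
  by (induction xs) (auto simp: odd_within_hone odd_within_hmul)

lemma odd_within_ufull: "odd_within m (ufull m k)"
  unfolding ufull_def
proof (intro odd_within_sum)
  fix I assume "I \<in> {I. I \<subseteq> {1..m} \<and> card I = k}"
  then have I: "I \<subseteq> {1..m}" "finite I" "card I = k"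
    by (auto intro: finite_subset)
  have "sorted_list_of_set I ! (l - 1) \<in> {1..m}" if "l \<in> {1..<k + 1}" for l
  proof -
    have "l - 1 < length (sorted_list_of_set I)"
      using I that by auto
    then have "sorted_list_of_set I ! (l - 1) \<in> I"
      using I(2) by (metis nth_mem set_sorted_list_of_set)
    then show ?thesis using I(1) by blast
  qed
  then have "odd_within m (xsq (sorted_list_of_set I ! (l - 1)) +
      hscale ((-1) ^ (k - l)) (xi (sorted_list_of_set I ! (l - 1))))"
    if "l \<in> {1..<k + 1}" for l
    using that by (intro odd_within_add odd_within_xsq odd_within_hscale odd_within_xi)
  then show "odd_within m (ufac k I)"
    unfolding ufac_def Let_def by (intro odd_within_hprod) auto
qed

lemma W_odd_within: "f \<in> W m \<Longrightarrow> odd_within m f"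
  by (induction rule: W.induct)
     (auto simp: u_def intro: odd_within_hpart odd_within_ufull odd_within_hone odd_within_add
        odd_within_hscale odd_within_hmul)

lemma W_odd_finite: "f \<in> W m \<Longrightarrow> odd_finite f"
  using W_odd_within odd_within_odd_finite by blast

lemma W_zero: "0 \<in> W m"
proof -
  have "hscale 0 hone \<in> W m" by (rule W.scale[OF W.one])
  then show ?thesis by simp
qed

lemma W_sum: "(\<And>x. x \<in> X \<Longrightarrow> F x \<in> W m) \<Longrightarrow> sum F X \<in> W m"
  by (induction X rule: infinite_finite_induct) (auto intro: W_zero W.add)

lemma W_hpart_homogeneous: "homogeneous e' f \<Longrightarrow> f \<in> W m \<Longrightarrow> hpart e f \<in> W m"
  by (simp add: hpart_homogeneous W_zero)

lemma W_hpart: "f \<in> W m \<Longrightarrow> hpart e f \<in> W m"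
proof (induction arbitrary: e rule: W.induct)
  case (gen k e')
  then show ?case
    unfolding u_def by (intro W_hpart_homogeneous[OF homogeneous_hpart]) (use W.gen u_def in auto)
next
  case one
  show ?case by (rule W_hpart_homogeneous[OF homogeneous_hone W.one])
next
  case (add f g)
  then show ?case by (simp add: hpart_add W.add)
next
  case (scale f c)
  then show ?case by (simp add: hpart_hscale W.scale)
next
  case (mul f g)
  have "odd_finite (hpart e' f)" "odd_finite (hpart e' g)" for e'
    using mul W_odd_finite odd_finite_hpart by auto
  then have parts: "hpart e (hmul (hpart e1 f) (hpart e2 g)) \<in> W m" for e1 e2
    by (intro W_hpart_homogeneous[OF homogeneous_hmul[OF _ _ homogeneous_hpart homogeneous_hpart]]
        W.mul mul.IH)
  have "hpart e (hmul f g) = hpart e (hmul (\<Sum>e1<2. hpart e1 f) (\<Sum>e2<2. hpart e2 g))"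
    by (simp only: sum_hpart)
  also have "\<dots> \<in> W m"
    unfolding hmul_sum_left hmul_sum_right hpart_sum by (intro W_sum parts)
  finally show ?case .
qed

lemma W_funpow_parity_aut: "f \<in> W m \<Longrightarrow> (parity_aut ^^ b) f \<in> W m"
  by (induction b) (simp_all add: parity_aut_eq_hpart W.add W.scale W_hpart)

lemma W_ufull: "ufull m k \<in> W m"
proof (cases "1 \<le> k \<and> k \<le> m")
  case True
  then have "u m k 0 + u m k 1 \<in> W m"
    by (intro W.add W.gen) auto
  then show ?thesis
    by (simp only: u_def hpart_split)
next
  case False
  then consider "k = 0" | "m < k" by linarith
  then show ?thesis
  proof cases
    case 1
    have "card I = 0 \<longleftrightarrow> I = {}" if "I \<subseteq> {1..m}" for I
      using finite_subset[OF that] by simp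
    then have "{I. I \<subseteq> {1..m} \<and> card I = 0} = {{}}"
      by auto
    then show ?thesis using 1 W.one by (simp add: ufull_def ufac_def)
  next
    case 2
    have "card I \<noteq> k" if "I \<subseteq> {1..m}" for I
      using card_mono[OF finite_atLeastAtMost that] 2 by simp
    then have "{I. I \<subseteq> {1..m} \<and> card I = k} = {}"
      by blast
    then show ?thesis
      unfolding ufull_def by (simp only: sum.empty W_zero)
  qed
qed

lemma hspan_sum: "(\<And>x. x \<in> X \<Longrightarrow> F x \<in> hspan S) \<Longrightarrow> sum F X \<in> hspan S"
  by (induction X rule: infinite_finite_induct) (auto intro: hspan.intros)

lemma hspan_hmul_closed:
  assumes gens: "\<And>x y. x \<in> S \<Longrightarrow> y \<in> S \<Longrightarrow> hmul x y \<in> hspan S"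
    and "x \<in> hspan S" "y \<in> hspan S"
  shows "hmul x y \<in> hspan S"
  using assms(2)
proof (induction rule: hspan.induct)
  case (base f)
  from assms(3) show ?case
    by (induction rule: hspan.induct)
       (auto simp: hmul_add_right hmul_hscale_right gens[OF base] intro: hspan.intros)
qed (auto simp: hmul_add_left hmul_hscale_left intro: hspan.intros)

lemma Wtensor_gen: "a \<in> W i \<Longrightarrow> b \<in> W j \<Longrightarrow> hmul a (sh i b) \<in> Wtensor i j"
  unfolding Wtensor_def by (rule hspan.base) blast

lemma Wtensor_zero: "0 \<in> Wtensor i j"
  unfolding Wtensor_def by (rule hspan.zero)

lemma Wtensor_add: "x \<in> Wtensor i j \<Longrightarrow> y \<in> Wtensor i j \<Longrightarrow> x + y \<in> Wtensor i j"
  unfolding Wtensor_def by (rule hspan.add)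

lemma Wtensor_hscale: "x \<in> Wtensor i j \<Longrightarrow> hscale c x \<in> Wtensor i j"
  unfolding Wtensor_def by (rule hspan.scale)

lemma Wtensor_sum: "(\<And>x. x \<in> X \<Longrightarrow> F x \<in> Wtensor i j) \<Longrightarrow> sum F X \<in> Wtensor i j"
  unfolding Wtensor_def by (rule hspan_sum)

lemma odd_disjoint_sh:
  assumes "odd_within i a" "odd_within j b"
    and "p \<in> Poly_Mapping.keys a" "q \<in> Poly_Mapping.keys (sh i b)"
  shows "snd p \<inter> snd q = {}"
proof -
  obtain q' where q': "q' \<in> Poly_Mapping.keys b" "q = shkey i q'"
    using keys_mono_map_subset assms(4) unfolding sh_eq_mono_map by blast
  have "snd p \<subseteq> {1..i}"
    using assms(1,3) by (auto simp: odd_within_def)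
  moreover have "snd q' \<subseteq> {1..j}"
    using assms(2) q'(1) by (simp add: odd_within_def)
  then have "snd q \<subseteq> {i + 1..}"
    using q'(2) by (auto simp: shkey_eq)
  ultimately show ?thesis by fastforce
qed

lemma hmul_Wtensor_gens:
  assumes "a \<in> W i" "a' \<in> W i" "b \<in> W j" "b' \<in> W j"
    and "homogeneous e b" "homogeneous e' a'"
  shows "hmul (hmul a (sh i b)) (hmul a' (sh i b')) =
    hscale ((-1) ^ (e' * e)) (hmul (hmul a a') (sh i (hmul b b')))"
proof -
  have fin: "odd_finite a" "odd_finite a'" "odd_finite b" "odd_finite b'"
      "odd_finite (sh i b)" "odd_finite (sh i b')"
    using assms W_odd_finite odd_finite_sh by auto
  have swap: "hmul (sh i b) a' = hscale ((-1) ^ (e' * e)) (hmul a' (sh i b))"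
    using assms by (intro hmul_supercommute fin homogeneous_sh odd_disjoint_sh W_odd_within)
  have "hmul (hmul a (sh i b)) (hmul a' (sh i b')) = hmul a (hmul (hmul (sh i b) a') (sh i b'))"
    using fin by (simp add: hmul_assoc odd_finite_hmul)
  also have "\<dots> = hscale ((-1) ^ (e' * e)) (hmul a (hmul (hmul a' (sh i b)) (sh i b')))"
    by (simp add: swap hmul_hscale_left hmul_hscale_right)
  also have "\<dots> = hscale ((-1) ^ (e' * e)) (hmul (hmul a a') (sh i (hmul b b')))"
    using fin by (simp add: hmul_assoc odd_finite_hmul sh_hmul)
  finally show ?thesis .
qed

lemma Wtensor_hmul:
  assumes "x \<in> Wtensor i j" "y \<in> Wtensor i j"
  shows "hmul x y \<in> Wtensor i j"
  using assms unfolding Wtensor_def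
proof (rule hspan_hmul_closed[rotated])
  fix x y assume "x \<in> {hmul a (sh i b) |a b. a \<in> W i \<and> b \<in> W j}"
    and "y \<in> {hmul a (sh i b) |a b. a \<in> W i \<and> b \<in> W j}"
  then obtain a b a' b' where xy: "x = hmul a (sh i b)" "y = hmul a' (sh i b')"
    and W: "a \<in> W i" "a' \<in> W i" "b \<in> W j" "b' \<in> W j"
    by blast
  have parts: "hmul (hmul a (sh i (hpart e1 b))) (hmul (hpart e2 a') (sh i b')) \<in> Wtensor i j"
    for e1 e2
  proof -
    have "hmul (hmul a (sh i (hpart e1 b))) (hmul (hpart e2 a') (sh i b')) =
        hscale ((-1) ^ (e2 * e1)) (hmul (hmul a (hpart e2 a')) (sh i (hmul (hpart e1 b) b')))"
      using W by (intro hmul_Wtensor_gens W_hpart homogeneous_hpart)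
    moreover have "hmul (hmul a (hpart e2 a')) (sh i (hmul (hpart e1 b) b')) \<in> Wtensor i j"
      using W by (intro Wtensor_gen W.mul W_hpart)
    ultimately show ?thesis
      by (simp add: Wtensor_hscale)
  qed
  have "hmul x y = hmul (hmul a (sh i (\<Sum>e1<2. hpart e1 b))) (hmul (\<Sum>e2<2. hpart e2 a') (sh i b'))"
    by (simp only: xy sum_hpart)
  also have "\<dots> \<in> Wtensor i j"
    unfolding sh_sum hmul_sum_left hmul_sum_right by (intro Wtensor_sum parts)
  finally show "hmul x y \<in> hspan {hmul a (sh i b) |a b. a \<in> W i \<and> b \<in> W j}"
    by (simp only: Wtensor_def)
qed

lemma Wtensor_hpart:
  assumes "a \<in> W i" "b \<in> W j"
  shows "hpart e (hmul a (sh i b)) \<in> Wtensor i j"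
proof -
  have parts: "hpart e (hmul (hpart e1 a) (sh i (hpart e2 b))) \<in> Wtensor i j" for e1 e2
  proof -
    have "homogeneous ((e1 + e2) mod 2) (hmul (hpart e1 a) (sh i (hpart e2 b)))"
      using assms
      by (intro homogeneous_hmul homogeneous_hpart homogeneous_sh odd_finite_hpart odd_finite_sh
          W_odd_finite)
    moreover have "hmul (hpart e1 a) (sh i (hpart e2 b)) \<in> Wtensor i j"
      using assms by (intro Wtensor_gen W_hpart)
    ultimately show ?thesis
      by (simp add: hpart_homogeneous Wtensor_zero)
  qed
  have "hpart e (hmul a (sh i b)) = hpart e (hmul (\<Sum>e1<2. hpart e1 a) (sh i (\<Sum>e2<2. hpart e2 b)))"
    by (simp only: sum_hpart)
  also have "\<dots> \<in> Wtensor i j"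
    unfolding sh_sum hmul_sum_left hmul_sum_right hpart_sum by (intro Wtensor_sum parts)
  finally show ?thesis .
qed

lemma u_in_Wtensor: "u (i + j) k e \<in> Wtensor i j"
  unfolding u_def ufull_split hpart_sum
  by (intro Wtensor_sum Wtensor_hpart W_funpow_parity_aut W_ufull)

theorem lemma3p3:
  fixes i j n :: nat
  assumes "1 \<le> i" and "1 \<le> j" and "i + j = n"
  shows "W n \<subseteq> Wtensor i j"
proof
  fix f assume "f \<in> W n"
  then show "f \<in> Wtensor i j"
  proof (induction rule: W.induct)
    case (gen k e)
    show ?case using u_in_Wtensor[of i j k e] assms(3) by simp
  next
    case one
    show ?case using Wtensor_gen[OF W.one W.one] by simp
  next
    case (add f g)
    show ?case using add.IH by (rule Wtensor_add)
  next
    case (scale f c)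
    show ?case using scale.IH by (rule Wtensor_hscale)
  next
    case (mul f g)
    show ?case using mul.IH by (rule Wtensor_hmul)
  qed
qed

end
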